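(* Let $\mathcal L>0$, $m_\pm>0$, $\rho_\pm>0$, $S_+<0<S_-$, $\lambda_\pm=\sqrt{\rho_\pm/m_\pm}$, and $S_I=0$. Consider the ODE system $\dot q_1=\mathcal H_1^{\rm p}(q_1,q_2)$, $\dot q_2=\mathcal H_2^{\rm p}(q_1,q_2)$ with \[ \mathcal H_1^{\rm p}(q_1,q_2)=\tfrac12\Big(-\tfrac{S_+}{\rho_+}m_+\lambda_+\tanh\big(\lambda_+\tfrac{q_2-q_1}{2}\big)-\tfrac{S_-}{\rho_-}m_-\lambda_-\tanh(\lambda_-q_1)-S_I\Big), \] \[ \mathcal H_2^{\rm p}(q_1,q_2)=\tfrac12\Big(\tfrac{S_+}{\rho_+}m_+\lambda_+\tanh\big(\lambda_+\tfrac{q_2-q_1}{2}\big)+\tfrac{S_-}{\rho_-}m_-\lambda_-\tanh(\lambda_-(\mathcal L-q_2))+S_I\Big). \] Then the triangular set $\mathcal T=\{(q_1,q_2)\in\mathbb R^2: 0\le q_2\le\mathcal L,\ 0\le q_1\le q_2\}$ is invariant for this system: if $(q_1(0),q_2(0))\in\mathcal T$, then any solution $(q_1(t),q_2(t))_{t>0}$ emanating from it satisfies $(q_1(t),q_2(t))\in\mathcal T$ for all $t>0$.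
   Context: This ODE system describes the motion of the two interfaces $z=q_1(t)<z=q_2(t)$ of a flat layer $\Omega_+=(q_1,q_2)\times(0,\tilde{\mathcal L})^{d-1}$ in $(0,\mathcal L)\times(0,\tilde{\mathcal L})^{d-1}$ for the chemically active Mullins--Sekerka problem. *)

theory Defs
  imports "HOL-Analysis.Analysis"
begin

definition H1p :: "real \<Rightarrow> real \<Rightarrow> real \<Rightarrow> real \<Rightarrow> real \<Rightarrow> real \<Rightarrow> real \<Rightarrow> real \<Rightarrow> real \<Rightarrow> real \<Rightarrow> real" where
  "H1p L mp mm rp rm Sp Sm SI q1 q2 =
     (let lp = sqrt (rp / mp); lm = sqrt (rm / mm) in
      (1/2) * ( - (Sp / rp) * mp * lp * tanh (lp * (q2 - q1) / 2)
                - (Sm / rm) * mm * lm * tanh (lm * q1) - SI))"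

definition H2p :: "real \<Rightarrow> real \<Rightarrow> real \<Rightarrow> real \<Rightarrow> real \<Rightarrow> real \<Rightarrow> real \<Rightarrow> real \<Rightarrow> real \<Rightarrow> real \<Rightarrow> real" where
  "H2p L mp mm rp rm Sp Sm SI q1 q2 =
     (let lp = sqrt (rp / mp); lm = sqrt (rm / mm) in
      (1/2) * ( (Sp / rp) * mp * lp * tanh (lp * (q2 - q1) / 2)
                + (Sm / rm) * mm * lm * tanh (lm * (L - q2)) + SI))"

definition triangleT :: "real \<Rightarrow> (real \<times> real) set" where
  "triangleT L = {(q1, q2). 0 \<le> q2 \<and> q2 \<le> L \<and> 0 \<le> q1 \<and> q1 \<le> q2}"

end

theory Submission
  imports Defs
begin

text \<open>Each side of the triangle is a barrier: beyond it the vector field points back into the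
  triangle. Beyond the diagonal q1 = q2 the S+ term pushes the interfaces apart, while the two
  S- terms add up to k- (tanh (lambda- (L - q2)) + tanh (lambda- q1)), which is nonnegative
  because tanh is odd and increasing and q2 - q1 <= L. Beyond q1 = 0 or q2 = L the S- term points
  back, and once q1 <= q2 is known the S+ term does not oppose it. Finally, a continuous function
  that is increasing wherever it is negative cannot become negative, since it would have to do so
  at an interior minimum.\<close>

lemma barrier_nonneg:
  fixes f f' :: "real \<Rightarrow> real"
  assumes cont: "continuous_on {a..} f"
    and deriv: "\<And>t. t > a \<Longrightarrow> (f has_real_derivative f' t) (at t)"
    and inward: "\<And>t. t > a \<Longrightarrow> f t < 0 \<Longrightarrow> f' t > 0"
    and start: "f a \<ge> 0" and "s \<ge> a"
  shows "f s \<ge> 0"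
proof (rule ccontr)
  assume "\<not> f s \<ge> 0"
  have "continuous_on {a..s} f" using cont by (rule continuous_on_subset) auto
  then obtain m where m: "m \<in> {a..s}" and min: "\<And>x. x \<in> {a..s} \<Longrightarrow> f m \<le> f x"
    using continuous_attains_inf[of "{a..s}" f] \<open>s \<ge> a\<close> by auto
  have fm_neg: "f m < 0" using min[of s] \<open>s \<ge> a\<close> \<open>\<not> f s \<ge> 0\<close> by auto
  with start m have "m > a" by (cases "m = a") auto
  with fm_neg have "f' m > 0" by (rule inward[rotated])
  then obtain d where "d > 0" and left_smaller: "\<And>h. 0 < h \<Longrightarrow> h < d \<Longrightarrow> f (m - h) < f m"
    using DERIV_pos_inc_left[OF deriv[OF \<open>m > a\<close>]] by blast
  define h where "h = min (d / 2) ((m - a) / 2)"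
  have "0 < h" "h < d" "h < m - a" using \<open>d > 0\<close> \<open>m > a\<close> by (auto simp: h_def min_def)
  then have "f (m - h) < f m" by (intro left_smaller)
  moreover have "m - h \<in> {a..s}" using m \<open>0 < h\<close> \<open>h < m - a\<close> by auto
  ultimately show False using min by fastforce
qed

locale layer_parameters =
  fixes L mp mm rp rm Sp Sm SI :: real
  assumes mp_pos: "mp > 0" and mm_pos: "mm > 0" and rp_pos: "rp > 0" and rm_pos: "rm > 0"
    and Sp_neg: "Sp < 0" and Sm_pos: "Sm > 0" and SI_zero: "SI = 0"
begin

abbreviation H1 :: "real \<Rightarrow> real \<Rightarrow> real" where
  "H1 \<equiv> H1p L mp mm rp rm Sp Sm SI"

abbreviation H2 :: "real \<Rightarrow> real \<Rightarrow> real" where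
  "H2 \<equiv> H2p L mp mm rp rm Sp Sm SI"

definition lambda_plus :: real where "lambda_plus = sqrt (rp / mp)"
definition lambda_minus :: real where "lambda_minus = sqrt (rm / mm)"
definition k_plus :: real where "k_plus = - Sp / rp * mp * lambda_plus"
definition k_minus :: real where "k_minus = Sm / rm * mm * lambda_minus"

lemma lambda_plus_pos: "lambda_plus > 0"
  using mp_pos rp_pos by (simp add: lambda_plus_def)

lemma lambda_minus_pos: "lambda_minus > 0"
  using mm_pos rm_pos by (simp add: lambda_minus_def)

lemma k_plus_pos: "k_plus > 0"
  using mp_pos rp_pos Sp_neg lambda_plus_pos by (simp add: k_plus_def divide_neg_pos mult_neg_pos)

lemma k_minus_pos: "k_minus > 0"
  using mm_pos rm_pos Sm_pos lambda_minus_pos by (simp add: k_minus_def)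

lemma H1_eq:
  "H1 x y = (k_plus * tanh (lambda_plus * (y - x) / 2) - k_minus * tanh (lambda_minus * x)) / 2"
  by (simp add: H1p_def Let_def SI_zero lambda_plus_def lambda_minus_def k_plus_def k_minus_def)

lemma H2_eq:
  "H2 x y = (k_minus * tanh (lambda_minus * (L - y)) - k_plus * tanh (lambda_plus * (y - x) / 2)) / 2"
  by (simp add: H2p_def Let_def SI_zero lambda_plus_def lambda_minus_def k_plus_def k_minus_def)

lemma H1_pos_if_left_of_zero:
  assumes "x < 0" "x \<le> y"
  shows "H1 x y > 0"
proof -
  have "tanh (lambda_plus * (y - x) / 2) \<ge> 0" using lambda_plus_pos \<open>x \<le> y\<close> by simp
  then have "k_plus * tanh (lambda_plus * (y - x) / 2) \<ge> 0" using k_plus_pos by simp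
  moreover have "tanh (lambda_minus * x) < 0"
    using lambda_minus_pos \<open>x < 0\<close> by (simp add: mult_pos_neg)
  then have "k_minus * tanh (lambda_minus * x) < 0" using k_minus_pos by (simp add: mult_pos_neg)
  ultimately show ?thesis unfolding H1_eq by simp
qed

lemma H2_neg_if_right_of_L:
  assumes "L < y" "x \<le> y"
  shows "H2 x y < 0"
proof -
  have "tanh (lambda_plus * (y - x) / 2) \<ge> 0" using lambda_plus_pos \<open>x \<le> y\<close> by simp
  then have "k_plus * tanh (lambda_plus * (y - x) / 2) \<ge> 0" using k_plus_pos by simp
  moreover have "tanh (lambda_minus * (L - y)) < 0"
    using lambda_minus_pos \<open>L < y\<close> by (simp add: mult_pos_neg)
  then have "k_minus * tanh (lambda_minus * (L - y)) < 0" using k_minus_pos by (simp add: mult_pos_neg)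
  ultimately show ?thesis unfolding H2_eq by simp
qed

lemma H1_lt_H2_if_crossed:
  assumes "0 \<le> L" "y < x"
  shows "H1 x y < H2 x y"
proof -
  have "tanh (lambda_plus * (y - x) / 2) < 0"
    using lambda_plus_pos \<open>y < x\<close> by (simp add: mult_pos_neg)
  then have "k_plus * tanh (lambda_plus * (y - x) / 2) < 0" using k_plus_pos by (simp add: mult_pos_neg)
  moreover have "- (lambda_minus * x) \<le> lambda_minus * (L - y)"
    using lambda_minus_pos assms mult_left_mono[of "y - x" L lambda_minus] by (simp add: algebra_simps)
  then have "tanh (lambda_minus * (L - y)) + tanh (lambda_minus * x) \<ge> 0"
    using tanh_real_le_iff[of "- (lambda_minus * x)" "lambda_minus * (L - y)"] by simp
  then have "k_minus * tanh (lambda_minus * (L - y)) + k_minus * tanh (lambda_minus * x) \<ge> 0"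
    using k_minus_pos by (simp flip: distrib_left)
  ultimately show ?thesis unfolding H1_eq H2_eq by simp
qed

end

locale layer_trajectory = layer_parameters +
  fixes q1 q2 :: "real \<Rightarrow> real"
  assumes cont1: "continuous_on {0..} q1" and cont2: "continuous_on {0..} q2"
    and ode1: "\<And>t. t > 0 \<Longrightarrow> (q1 has_real_derivative H1 (q1 t) (q2 t)) (at t)"
    and ode2: "\<And>t. t > 0 \<Longrightarrow> (q2 has_real_derivative H2 (q1 t) (q2 t)) (at t)"
    and init: "(q1 0, q2 0) \<in> triangleT L"
begin

lemma interfaces_ordered:
  assumes "t \<ge> 0"
  shows "q1 t \<le> q2 t"
proof -
  have "0 \<le> L" using init by (simp add: triangleT_def)
  have "q2 t - q1 t \<ge> 0"
  proof (rule barrier_nonneg[where f = "\<lambda>t. q2 t - q1 t"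
        and f' = "\<lambda>t. H2 (q1 t) (q2 t) - H1 (q1 t) (q2 t)"])
    show "continuous_on {0..} (\<lambda>t. q2 t - q1 t)" using cont1 cont2 by (intro continuous_intros)
    show "((\<lambda>t. q2 t - q1 t) has_real_derivative H2 (q1 t) (q2 t) - H1 (q1 t) (q2 t)) (at t)"
      if "t > 0" for t
      using ode1[OF that] ode2[OF that] by (intro derivative_intros)
    show "H2 (q1 t) (q2 t) - H1 (q1 t) (q2 t) > 0" if "q2 t - q1 t < 0" for t
      using H1_lt_H2_if_crossed[OF \<open>0 \<le> L\<close>] that by simp
    show "q2 0 - q1 0 \<ge> 0" using init by (simp add: triangleT_def)
  qed (fact \<open>t \<ge> 0\<close>)
  then show ?thesis by simp
qed

lemma q1_nonneg:
  assumes "t \<ge> 0"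
  shows "0 \<le> q1 t"
proof (rule barrier_nonneg[OF cont1 ode1])
  show "H1 (q1 t) (q2 t) > 0" if "t > 0" "q1 t < 0" for t
    using that by (intro H1_pos_if_left_of_zero interfaces_ordered) simp_all
  show "q1 0 \<ge> 0" using init by (simp add: triangleT_def)
qed (use \<open>t \<ge> 0\<close> in auto)

lemma q2_le_L:
  assumes "t \<ge> 0"
  shows "q2 t \<le> L"
proof -
  have "L - q2 t \<ge> 0"
  proof (rule barrier_nonneg[where f = "\<lambda>t. L - q2 t" and f' = "\<lambda>t. - H2 (q1 t) (q2 t)"])
    show "continuous_on {0..} (\<lambda>t. L - q2 t)" using cont2 by (intro continuous_intros)
    show "((\<lambda>t. L - q2 t) has_real_derivative - H2 (q1 t) (q2 t)) (at t)" if "t > 0" for t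
      using ode2[OF that] by (auto intro!: derivative_eq_intros)
    show "- H2 (q1 t) (q2 t) > 0" if "t > 0" "L - q2 t < 0" for t
      using H2_neg_if_right_of_L[where x = "q1 t" and y = "q2 t"] interfaces_ordered[of t] that
      by simp
    show "L - q2 0 \<ge> 0" using init by (simp add: triangleT_def)
  qed (fact \<open>t \<ge> 0\<close>)
  then show ?thesis by simp
qed

lemma trajectory_in_triangle:
  assumes "t \<ge> 0"
  shows "(q1 t, q2 t) \<in> triangleT L"
  using interfaces_ordered[OF assms] q1_nonneg[OF assms] q2_le_L[OF assms]
  by (simp add: triangleT_def)

end

theorem proposition4p1:
  fixes L mp mm rp rm Sp Sm SI :: real and q1 q2 :: "real \<Rightarrow> real"
  assumes "L > 0" "mp > 0" "mm > 0" "rp > 0" "rm > 0" "Sp < 0" "0 < Sm" "SI = 0"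
    and cont1: "continuous_on {0..} q1" and cont2: "continuous_on {0..} q2"
    and ode1: "\<And>t. t > 0 \<Longrightarrow> (q1 has_real_derivative H1p L mp mm rp rm Sp Sm SI (q1 t) (q2 t)) (at t)"
    and ode2: "\<And>t. t > 0 \<Longrightarrow> (q2 has_real_derivative H2p L mp mm rp rm Sp Sm SI (q1 t) (q2 t)) (at t)"
    and init: "(q1 0, q2 0) \<in> triangleT L"
  shows "\<forall>t > 0. (q1 t, q2 t) \<in> triangleT L"
proof -
  interpret layer_trajectory L mp mm rp rm Sp Sm SI q1 q2
    using assms by unfold_locales auto
  show ?thesis using trajectory_in_triangle by simp
qed

end
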